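(* Let $\beta\in\mathbb{F}_{p^m}\setminus\{0\}$ and let $\mathcal{C}=\left\langle\left(x^2+\gamma x+\frac{\gamma^2}{2}\right)^i\left(x^2-\gamma x+\frac{\gamma^2}{2}\right)^j\right\rangle$, $0\le i,j\le 2p^s$, be an $(\alpha+\beta u)$-constacyclic code of length $4p^s$ over $R$. Then its dual code, viewed as an ideal of $R[x]/\langle x^{4p^s}-(\alpha+\beta u)^{-1}\rangle$, is $$\mathcal{C}^{\perp}=\left\langle\left(x^2+2\gamma^{-1}x+\tfrac{2}{\gamma^2}\right)^{2p^s-i}\left(x^2-2\gamma^{-1}x+\tfrac{2}{\gamma^2}\right)^{2p^s-j}\right\rangle.$$
   Context: Let $p$ be an odd prime and $m,s$ positive integers with $p^m\equiv 3\pmod 4$; $\mathbb{F}_{p^m}$ is the field with $p^m$ elements and $R=\mathbb{F}_{p^m}[u]/\langle u^2\rangle$. Fix $\alpha\in\mathbb{F}_{p^m}\setminus\{0\}$ that is not a square in $\mathbb{F}_{p^m}$, let $\alpha_0\in\mathbb{F}_{p^m}$ satisfy $\alpha_0^{p^s}=\alpha$, and let $\gamma\in\mathbb{F}_{p^m}$ satisfy $\gamma^4+4\alpha_0=0$. A $\lambda$-constacyclic code of length $n$ over $R$ ($\lambda$ a unit) is identified with an ideal of $R[x]/\langle x^n-\lambda\rangle$ via $(c_0,\dots,c_{n-1})\mapsto\sum c_ix^i$. The dual code is $\mathcal{C}^\perp=\{a\in R^n: \sum_k a_kc_k=0\ \forall c\in\mathcal{C}\}$, which is a $\lambda^{-1}$-constacyclic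 code and hence identified with an ideal of $R[x]/\langle x^n-\lambda^{-1}\rangle$. *)

theory Defs
  imports "HOL-Computational_Algebra.Polynomial"
begin

text \<open>An element a + b u of F[u]/<u^2> is represented as Dual a b.\<close>

datatype 'a dual = Dual (re: 'a) (du: 'a)

instantiation dual :: (comm_ring_1) comm_ring_1
begin
definition "0 = Dual 0 0"
definition "1 = Dual 1 0"
definition "x + y = Dual (re x + re y) (du x + du y)"
definition "x - y = Dual (re x - re y) (du x - du y)"
definition "- x = Dual (- re x) (- du x)"
definition "x * y = Dual (re x * re y) (re x * du y + du x * re y)"
instance
  by standard
     (auto simp: zero_dual_def one_dual_def plus_dual_def minus_dual_def
                 uminus_dual_def times_dual_def algebra_simps intro: dual.expand)
end

definition dconst :: "'a::comm_ring_1 \<Rightarrow> 'a dual" where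
  "dconst a = Dual a 0"

definition uu :: "'a::comm_ring_1 dual" where
  "uu = Dual 0 1"

definition dinv :: "'a::field dual \<Rightarrow> 'a dual" where
  "dinv x = Dual (inverse (re x)) (- du x * inverse (re x) ^ 2)"

text \<open>The ideal generated by g in R[x]/<x^n - lam>, viewed as a set of words of length n
  (identified with polynomials of degree < n, i.e. canonical representatives).\<close>
definition constacyclic_ideal ::
  "nat \<Rightarrow> 'a::comm_ring_1 \<Rightarrow> 'a poly \<Rightarrow> 'a list set" where
  "constacyclic_ideal n lam g =
     {c. length c = n \<and> (\<exists>f q. Poly c = g * f + q * (monom 1 n - [:lam:]))}"

definition dual_code :: "nat \<Rightarrow> 'a::comm_ring_1 list set \<Rightarrow> 'a list set" where
  "dual_code n C = {a. length a = n \<and> (\<forall>c\<in>C. (\<Sum>k<n. a ! k * c ! k) = 0)}"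

end

(*
  Write \<lambda> = \<alpha> + \<beta>u, \<mu> = \<lambda>\<^sup>-\<^sup>1 and n = 4p^s. The inner products of a word a with the
  codewords of \<langle>f\<rangle> are, after reversing the codewords, the coefficients of a(x) f\<^sup>*(x) reduced
  modulo x^n - \<mu>, where f\<^sup>* is the reciprocal of f. Hence a lies in the dual code iff
  x^n - \<mu> divides a f\<^sup>*. Since u\<^sup>2 = 0 and \<beta> \<noteq> 0, the polynomial x^n - \<mu> divides a
  polynomial over F_{p^m} iff (x^n - \<alpha>\<^sup>-\<^sup>1)\<^sup>2 does, so the dual is generated by a generator of the
  annihilator of f\<^sup>* modulo (x^n - \<alpha>\<^sup>-\<^sup>1)\<^sup>2. Finally x^4 - \<alpha>\<^sub>0\<^sup>-\<^sup>1 is the product of the two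
  quadratics x\<^sup>2 \<plusminus> 2\<gamma>\<^sup>-\<^sup>1x + 2/\<gamma>\<^sup>2, so by the Frobenius x^n - \<alpha>\<^sup>-\<^sup>1 is their product raised
  to p^s, while the reciprocals of x\<^sup>2 \<plusminus> \<gamma>x + \<gamma>\<^sup>2/2 are scalar multiples of them: the
  annihilator is generated by the complementary powers.
*)
theory Submission
  imports Defs "HOL-Number_Theory.Residues"
begin

(* Residues (needed for CHAR_dvd_CARD) brings HOL-Algebra's polynomial constants into scope. *)
hide_const (open) UnivPoly.monom UnivPoly.coeff Module.smult

section \<open>Dual numbers\<close>

lemma dual_eq_iff: "x = y \<longleftrightarrow> re x = re y \<and> du x = du y"
  by (cases x; cases y) auto

lemma re_0 [simp]: "re 0 = 0" and du_0 [simp]: "du 0 = 0"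
  and re_1 [simp]: "re 1 = 1" and du_1 [simp]: "du 1 = 0"
  by (simp_all add: zero_dual_def one_dual_def)

lemma re_add [simp]: "re (x + y) = re x + re y" and du_add [simp]: "du (x + y) = du x + du y"
  and re_diff [simp]: "re (x - y) = re x - re y" and du_diff [simp]: "du (x - y) = du x - du y"
  and re_uminus [simp]: "re (- x) = - re x" and du_uminus [simp]: "du (- x) = - du x"
  and re_mult [simp]: "re (x * y) = re x * re y"
  and du_mult [simp]: "du (x * y) = re x * du y + du x * re y"
  by (simp_all add: plus_dual_def minus_dual_def uminus_dual_def times_dual_def)

lemma re_dconst [simp]: "re (dconst a) = a" and du_dconst [simp]: "du (dconst a) = 0"
  by (simp_all add: dconst_def)

lemma re_uu [simp]: "re uu = 0" and du_uu [simp]: "du uu = 1"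
  by (simp_all add: uu_def)

lemma dconst_0 [simp]: "dconst 0 = 0" and dconst_1 [simp]: "dconst 1 = 1"
  and dconst_add: "dconst (a + b) = dconst a + dconst b"
  and dconst_diff: "dconst (a - b) = dconst a - dconst b"
  and dconst_mult: "dconst (a * b) = dconst a * dconst b"
  by (simp_all add: dual_eq_iff)

lemma uu_mult_uu [simp]: "uu * uu = (0::'a::comm_ring_1 dual)"
  and uu_mult_uu_mult [simp]: "uu * (uu * x) = (0::'a::comm_ring_1 dual)"
  by (simp_all add: dual_eq_iff)

lemma dconst_add_dconst_mult_uu: "dconst a + dconst b * uu = Dual a b"
  by (simp add: dual_eq_iff)

lemma dinv_Dual: "dinv (Dual a b) = Dual (inverse a) (- b * inverse a ^ 2)"
  by (simp add: dinv_def)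

lemma Dual_mult_dinv: "a \<noteq> 0 \<Longrightarrow> Dual a b * dinv (Dual a b) = 1"
  by (simp add: dinv_def dual_eq_iff field_simps power2_eq_square)


section \<open>Reduction modulo x^n - l\<close>

definition xpow_minus :: "nat \<Rightarrow> 'a \<Rightarrow> 'a::comm_ring_1 poly" where
  "xpow_minus n l = monom 1 n - [:l:]"

lemma constacyclic_ideal_xpow_minus:
  "constacyclic_ideal n l g = {c. length c = n \<and> (\<exists>f q. Poly c = g * f + q * xpow_minus n l)}"
  by (simp add: constacyclic_ideal_def xpow_minus_def)

lemma coeff_xpow_minus:
  "0 < n \<Longrightarrow> coeff (xpow_minus n l) j = (if j = n then 1 else if j = 0 then - l else 0)"
  unfolding xpow_minus_def by (auto simp: coeff_pCons split: nat.split)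

lemma degree_xpow_minus: "0 < n \<Longrightarrow> degree (xpow_minus n l) = n"
  by (intro antisym degree_le le_degree) (auto simp: coeff_xpow_minus)

lemma xpow_minus_dvd_xpow_minus_power: "xpow_minus n l dvd xpow_minus (n * k) (l ^ k)"
proof -
  have "xpow_minus (n * k) (l ^ k) = (monom 1 n) ^ k - [:l:] ^ k"
    by (simp add: xpow_minus_def monom_power poly_const_pow)
  also have "\<dots> = xpow_minus n l * (\<Sum>i<k. [:l:] ^ (k - Suc i) * (monom 1 n) ^ i)"
    unfolding xpow_minus_def by (rule power_diff_sumr2)
  finally show ?thesis by simp
qed

definition constacyclic_rep :: "nat \<Rightarrow> 'a \<Rightarrow> 'a::comm_ring_1 poly \<Rightarrow> 'a poly" where
  "constacyclic_rep n l P = (\<Sum>k\<le>degree P. monom (coeff P k * l ^ (k div n)) (k mod n))"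

lemma coeff_constacyclic_rep:
  "coeff (constacyclic_rep n l P) j =
     (\<Sum>k\<le>degree P. if k mod n = j then coeff P k * l ^ (k div n) else 0)"
  unfolding constacyclic_rep_def coeff_sum by (intro sum.cong) auto

lemma coeff_constacyclic_rep_eq_0: "0 < n \<Longrightarrow> n \<le> j \<Longrightarrow> coeff (constacyclic_rep n l P) j = 0"
  unfolding coeff_constacyclic_rep by (intro sum.neutral) (metis leD mod_less_divisor)

lemma constacyclic_rep_0 [simp]: "constacyclic_rep n l 0 = 0"
  by (simp add: constacyclic_rep_def)

lemma xpow_minus_dvd_diff_constacyclic_rep: "xpow_minus n l dvd P - constacyclic_rep n l P"
proof -
  have "P - constacyclic_rep n l P =
      (\<Sum>k\<le>degree P. monom (coeff P k) (k mod n) * xpow_minus (n * (k div n)) (l ^ (k div n)))"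
  proof -
    have "monom (coeff P k) k - monom (coeff P k * l ^ (k div n)) (k mod n)
        = monom (coeff P k) (k mod n) * xpow_minus (n * (k div n)) (l ^ (k div n))" for k
    proof -
      have "monom (coeff P k) k = monom (coeff P k) (k mod n) * monom 1 (n * (k div n))"
        by (simp add: mult_monom mod_mult_div_eq)
      moreover have "monom (coeff P k * l ^ (k div n)) (k mod n)
          = monom (coeff P k) (k mod n) * [:l ^ (k div n):]"
        by (simp add: mult_monom flip: monom_0)
      ultimately show ?thesis by (simp add: xpow_minus_def right_diff_distrib)
    qed
    moreover have "P - constacyclic_rep n l P = (\<Sum>k\<le>degree P.
        monom (coeff P k) k - monom (coeff P k * l ^ (k div n)) (k mod n))"
      unfolding constacyclic_rep_def sum_subtractf by (simp add: poly_as_sum_of_monoms)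
    ultimately show ?thesis by simp
  qed
  also have "xpow_minus n l dvd \<dots>"
    by (intro dvd_sum dvd_mult xpow_minus_dvd_xpow_minus_power)
  finally show ?thesis .
qed

lemma xpow_minus_dvd_eq_0:
  assumes "0 < n" and "xpow_minus n l dvd P" and "\<forall>j\<ge>n. coeff P j = 0"
  shows "P = 0"
proof (rule ccontr)
  assume "P \<noteq> 0"
  from assms(2) obtain q where q: "P = xpow_minus n l * q" by (auto elim: dvdE)
  with \<open>P \<noteq> 0\<close> have "q \<noteq> 0" by auto
  then have "coeff P (n + degree q) \<noteq> 0"
    using q coeff_mult_degree_sum[of "xpow_minus n l" q] assms(1)
    by (simp add: degree_xpow_minus coeff_xpow_minus)
  with assms(3) show False by simp
qed

lemma constacyclic_rep_eq_if_dvd: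
  assumes "0 < n" and "xpow_minus n l dvd P - Q"
  shows "constacyclic_rep n l P = constacyclic_rep n l Q"
proof -
  have "constacyclic_rep n l P - constacyclic_rep n l Q
      = (Q - constacyclic_rep n l Q) - (P - constacyclic_rep n l P) + (P - Q)"
    by (simp add: algebra_simps)
  also have "xpow_minus n l dvd \<dots>"
    by (intro dvd_add dvd_diff xpow_minus_dvd_diff_constacyclic_rep assms(2))
  finally have "constacyclic_rep n l P - constacyclic_rep n l Q = 0"
    by (rule xpow_minus_dvd_eq_0[OF assms(1)]) (simp add: coeff_constacyclic_rep_eq_0[OF assms(1)])
  then show ?thesis by simp
qed

lemma coeff_constacyclic_rep_top:
  assumes n: "0 < n" and P: "\<forall>j\<ge>2 * n - 1. coeff P j = 0"
  shows "coeff (constacyclic_rep n l P) (n - 1) = coeff P (n - 1)"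
proof -
  have "coeff (constacyclic_rep n l P) (n - 1) = (\<Sum>k\<le>degree P. if k = n - 1 then coeff P k else 0)"
    unfolding coeff_constacyclic_rep
  proof (intro sum.cong refl)
    fix k
    show "(if k mod n = n - 1 then coeff P k * l ^ (k div n) else 0)
        = (if k = n - 1 then coeff P k else 0)"
    proof (cases "coeff P k = 0")
      case False
      then have k: "k < 2 * n - 1" using P by (meson not_le)
      then have "k div n < 2" using n by (simp add: less_mult_imp_div_less)
      moreover have "\<not> (k div n = 1 \<and> k mod n = n - 1)"
      proof
        assume "k div n = 1 \<and> k mod n = n - 1"
        then have "k = n + (n - 1)" using div_mult_mod_eq[of k n] by simp
        with k show False by linarith
      qed
      ultimately have "k mod n = n - 1 \<longleftrightarrow> k = n - 1"
        using n div_mult_mod_eq[of k n] by (auto simp: less_2_cases_iff div_eq_0_iff)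
      moreover have "k = n - 1 \<Longrightarrow> k div n = 0" using n by simp
      ultimately show ?thesis by auto
    qed auto
  qed
  also have "\<dots> = coeff P (n - 1)"
    by (cases "n - 1 \<le> degree P") (simp_all add: coeff_eq_0)
  finally show ?thesis .
qed

lemma xpow_minus_dvd_cancel_monom:
  assumes ul: "u * l = 1" and n: "0 < n" and dvd: "xpow_minus n l dvd monom 1 k * P - W"
  obtains h where "xpow_minus n l dvd P - W * h"
proof
  define h where "h = monom (u ^ k) ((n - 1) * k)"
  \<comment> \<open>the inverse of \<open>x^k\<close> modulo \<open>x^n - l\<close>\<close>
  have "h * monom 1 k - 1 = smult (u ^ k) (xpow_minus (n * k) (l ^ k))"
  proof -
    have "(n - 1) * k + k = n * k" using n by (simp add: algebra_simps)
    moreover have "u ^ k * l ^ k = 1" using ul by (simp flip: power_mult_distrib)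
    ultimately show ?thesis
      by (simp add: h_def xpow_minus_def mult_monom smult_diff_right smult_monom flip: one_pCons)
  qed
  then have unit: "xpow_minus n l dvd h * monom 1 k - 1"
    by (simp add: dvd_smult xpow_minus_dvd_xpow_minus_power)
  have "P - W * h = h * (monom 1 k * P - W) - (h * monom 1 k - 1) * P"
    by (simp add: algebra_simps)
  also have "xpow_minus n l dvd \<dots>"
    by (rule dvd_diff[OF dvd_mult[OF dvd] dvd_mult2[OF unit]])
  finally show "xpow_minus n l dvd P - W * h" .
qed

lemma Poly_map_coeff_upt: "\<forall>j\<ge>n. coeff p j = 0 \<Longrightarrow> Poly (map (coeff p) [0..<n]) = p"
  by (rule poly_eqI) (auto simp: nth_default_def)

lemma coeff_Poly_mult_Poly_rev:
  assumes "length a = n" and "length c = n" and "0 < n"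
  shows "coeff (Poly a * Poly (rev c)) (n - 1) = (\<Sum>k<n. a ! k * c ! k)"
proof -
  have "coeff (Poly a * Poly (rev c)) (n - 1)
      = (\<Sum>i\<le>n - 1. nth_default 0 a i * nth_default 0 (rev c) (n - 1 - i))"
    by (simp add: coeff_mult)
  also have "{..n - 1} = {..<n}" using assms(3) by auto
  also have "(\<Sum>i<n. nth_default 0 a i * nth_default 0 (rev c) (n - 1 - i)) = (\<Sum>k<n. a ! k * c ! k)"
    using assms by (intro sum.cong) (auto simp: nth_default_def rev_nth)
  finally show ?thesis .
qed

text \<open>This holds for every \<open>l\<close>: the product has degree \<open>< 2n - 1\<close>, so its coefficient of
  \<open>x^(n-1)\<close> is not affected by the reduction.\<close>
lemma inner_product_eq_coeff_constacyclic_rep: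
  assumes "length a = n" and "length c = n" and "0 < n"
  shows "(\<Sum>k<n. a ! k * c ! k) = coeff (constacyclic_rep n l (Poly a * Poly (rev c))) (n - 1)"
proof -
  have "degree (Poly a) \<le> n - 1" "degree (Poly (rev c)) \<le> n - 1"
    using assms by (auto intro!: degree_le simp: nth_default_def)
  then have "degree (Poly a * Poly (rev c)) \<le> 2 * n - 2"
    using degree_mult_le[of "Poly a" "Poly (rev c)"] by linarith
  then have "\<forall>j\<ge>2 * n - 1. coeff (Poly a * Poly (rev c)) j = 0"
    using assms(3) by (intro allI impI coeff_eq_0) linarith
  then have "coeff (constacyclic_rep n l (Poly a * Poly (rev c))) (n - 1)
      = coeff (Poly a * Poly (rev c)) (n - 1)"
    by (rule coeff_constacyclic_rep_top[OF assms(3)])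
  with coeff_Poly_mult_Poly_rev[OF assms] show ?thesis by simp
qed

lemma coeff_constacyclic_rep_monom_mult:
  assumes n: "0 < n" and r: "\<forall>j\<ge>n. coeff r j = 0" and k: "k < n"
  shows "coeff (constacyclic_rep n l (monom 1 k * r)) (n - 1) = coeff r (n - 1 - k)"
proof -
  have "\<forall>j\<ge>2 * n - 1. coeff (monom 1 k * r) j = 0"
    using r k by (auto simp: coeff_monom_mult)
  then have "coeff (constacyclic_rep n l (monom 1 k * r)) (n - 1) = coeff (monom 1 k * r) (n - 1)"
    by (rule coeff_constacyclic_rep_top[OF n])
  with k show ?thesis by (simp add: coeff_monom_mult)
qed


section \<open>Reversal of polynomials\<close>

text \<open>\<open>reverse_poly a P = x^(a-1) P(1/x)\<close> for \<open>P\<close> of degree \<open>< a\<close>; higher coefficients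
  of \<open>P\<close> are discarded.\<close>
definition reverse_poly :: "nat \<Rightarrow> 'a::comm_ring_1 poly \<Rightarrow> 'a poly" where
  "reverse_poly a P = (\<Sum>k<a. monom (coeff P k) (a - 1 - k))"

lemma coeff_reverse_poly:
  "coeff (reverse_poly a P) j = (if j < a then coeff P (a - 1 - j) else 0)"
proof -
  have "coeff (reverse_poly a P) j = (\<Sum>k<a. if k = a - 1 - j \<and> j < a then coeff P k else 0)"
    unfolding reverse_poly_def coeff_sum by (intro sum.cong) auto
  then show ?thesis by (simp add: sum.delta')
qed

lemma reverse_poly_diff: "reverse_poly a (P - Q) = reverse_poly a P - reverse_poly a Q"
  by (rule poly_eqI) (simp add: coeff_reverse_poly)

lemma reverse_poly_0 [simp]: "reverse_poly a 0 = 0"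
  by (simp add: reverse_poly_def)

lemma reverse_poly_add: "reverse_poly a (P + Q) = reverse_poly a P + reverse_poly a Q"
  by (rule poly_eqI) (simp add: coeff_reverse_poly)

lemma reverse_poly_sum: "reverse_poly a (sum f S) = (\<Sum>s\<in>S. reverse_poly a (f s))"
  by (induction S rule: infinite_finite_induct) (auto simp: reverse_poly_add)

lemma reverse_poly_reverse_poly: "\<forall>j\<ge>a. coeff P j = 0 \<Longrightarrow> reverse_poly a (reverse_poly a P) = P"
  by (rule poly_eqI) (auto simp: coeff_reverse_poly)

lemma reverse_poly_Poly: "length c = n \<Longrightarrow> reverse_poly n (Poly c) = Poly (rev c)"
  by (rule poly_eqI) (auto simp: coeff_reverse_poly nth_default_def rev_nth)

lemma reverse_poly_monom: "k < a \<Longrightarrow> reverse_poly a (monom c k) = monom c (a - 1 - k)"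
  by (rule poly_eqI) (auto simp: coeff_reverse_poly)

lemma reverse_poly_extend:
  assumes "\<forall>j\<ge>a. coeff P j = 0" and "a \<le> b"
  shows "reverse_poly b P = monom 1 (b - a) * reverse_poly a P"
  by (rule poly_eqI) (use assms in \<open>auto simp: coeff_reverse_poly coeff_monom_mult\<close>)

lemma reverse_poly_mult:
  assumes P: "\<forall>j\<ge>a. coeff P j = 0" and Q: "\<forall>j\<ge>b. coeff Q j = 0" and "0 < a" "0 < b"
  shows "reverse_poly (a + b - 1) (P * Q) = reverse_poly a P * reverse_poly b Q"
proof -
  have "degree P \<le> a - 1" "degree Q \<le> b - 1" using P Q by (auto intro: degree_le)
  then have P: "P = (\<Sum>i\<le>a - 1. monom (coeff P i) i)" and Q: "Q = (\<Sum>k\<le>b - 1. monom (coeff Q k) k)"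
    by (simp_all add: poly_as_sum_of_monoms')
  have monoms: "reverse_poly (a + b - 1) (monom (coeff P i) i * monom (coeff Q k) k)
      = reverse_poly a (monom (coeff P i) i) * reverse_poly b (monom (coeff Q k) k)"
    if "i \<le> a - 1" "k \<le> b - 1" for i k
    using that assms(3,4) by (simp add: mult_monom reverse_poly_monom)
  have "reverse_poly (a + b - 1) (P * Q) = reverse_poly (a + b - 1)
      (\<Sum>i\<le>a - 1. \<Sum>k\<le>b - 1. monom (coeff P i) i * monom (coeff Q k) k)"
    by (subst P, subst Q) (simp add: sum_product)
  also have "\<dots> = (\<Sum>i\<le>a - 1. \<Sum>k\<le>b - 1.
      reverse_poly a (monom (coeff P i) i) * reverse_poly b (monom (coeff Q k) k))"
    unfolding reverse_poly_sum by (intro sum.cong refl monoms) auto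
  also have "\<dots> = reverse_poly a P * reverse_poly b Q"
    by (subst (2) P, subst (2) Q) (simp add: sum_product reverse_poly_sum)
  finally show ?thesis .
qed

lemma reverse_poly_power:
  assumes "degree f \<le> d"
  shows "reverse_poly (d * k + 1) (f ^ k) = reverse_poly (d + 1) f ^ k"
proof (induction k)
  case 0
  show ?case by (rule poly_eqI) (simp add: coeff_reverse_poly)
next
  case (Suc k)
  have "degree (f ^ k) \<le> d * k"
    using degree_power_le[of f k] assms by (metis mult.commute mult_right_mono order_trans zero_le)
  then have "reverse_poly ((d + 1) + (d * k + 1) - 1) (f * f ^ k)
      = reverse_poly (d + 1) f * reverse_poly (d * k + 1) (f ^ k)"
    using assms by (intro reverse_poly_mult) (auto intro: coeff_eq_0)
  then show ?case using Suc by (simp add: algebra_simps)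
qed

lemma reverse_poly_quadratic: "reverse_poly 3 [:a, b, c:] = [:c, b, a:]"
  by (rule poly_eqI) (auto simp: coeff_reverse_poly coeff_pCons numeral_3_eq_3 less_Suc_eq
      split: nat.split)

lemma reverse_poly_xpow_minus:
  assumes "l * m = 1" and "0 < n"
  shows "reverse_poly (n + 1) (xpow_minus n l) = - [:l:] * xpow_minus n m"
  by (rule poly_eqI) (use assms in \<open>auto simp: coeff_reverse_poly coeff_xpow_minus mult.commute\<close>)

text \<open>Reversal maps the ideal generated by \<open>x^n - l\<close> to that generated by \<open>x^n - l^{-1}\<close>,
  up to the power of \<open>x\<close> that makes the reversal lengths match.\<close>
lemma xpow_minus_dvd_reverse_poly:
  assumes lm: "l * m = 1" and n: "0 < n" and c: "length c = n"
    and dvd: "xpow_minus n l dvd Poly c - H" and H: "\<forall>j\<ge>M. coeff H j = 0" and M: "n \<le> M"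
  shows "xpow_minus n m dvd monom 1 (M - n) * Poly (rev c) - reverse_poly M H"
proof -
  obtain q where q: "Poly c - H = xpow_minus n l * q" using dvd by (auto elim: dvdE)
  have c_high: "\<forall>j\<ge>n. coeff (Poly c) j = 0" using c by (auto simp: nth_default_def)
  have eq: "monom 1 (M - n) * Poly (rev c) - reverse_poly M H = reverse_poly M (Poly c - H)"
    using reverse_poly_extend[OF c_high M] by (simp add: reverse_poly_Poly[OF c] reverse_poly_diff)
  show ?thesis
  proof (cases "q = 0")
    case True
    then show ?thesis using eq q by simp
  next
    case False
    have "coeff (Poly c - H) (n + degree q) \<noteq> 0"
      using q coeff_mult_degree_sum[of "xpow_minus n l" q] n False
      by (simp add: degree_xpow_minus coeff_xpow_minus)
    then have "n + degree q < M" using c_high H M by (metis coeff_diff diff_zero le_add1 le_trans not_le)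
    then have "\<forall>j\<ge>M - n. coeff q j = 0" by (auto intro: coeff_eq_0)
    moreover have "\<forall>j\<ge>n + 1. coeff (xpow_minus n l) j = 0" using n by (simp add: coeff_xpow_minus)
    ultimately have "reverse_poly ((n + 1) + (M - n) - 1) (xpow_minus n l * q)
        = reverse_poly (n + 1) (xpow_minus n l) * reverse_poly (M - n) q"
      using \<open>n + degree q < M\<close> by (intro reverse_poly_mult) auto
    then have "reverse_poly M (Poly c - H) = xpow_minus n m * (- [:l:] * reverse_poly (M - n) q)"
      using M q reverse_poly_xpow_minus[OF lm n] by (simp add: algebra_simps)
    then show ?thesis using eq by (metis dvd_triv_left)
  qed
qed

section \<open>Dual codes of constacyclic codes\<close>

lemma inner_product_eq_0_if_dvd_reverse_poly:
  fixes f :: "'a::comm_ring_1 poly"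
  assumes lm: "l * m = 1" and n: "0 < n" and a0: "0 < a0" and f: "\<forall>j\<ge>a0. coeff f j = 0"
    and c: "c \<in> constacyclic_ideal n l f" and d: "length d = n"
    and dvd: "xpow_minus n m dvd Poly d * reverse_poly a0 f"
  shows "(\<Sum>k<n. d ! k * c ! k) = 0"
proof -
  obtain h q where c_len: "length c = n" and Pc: "Poly c = f * h + q * xpow_minus n l"
    using c unfolding constacyclic_ideal_xpow_minus by auto
  define b where "b = degree h + n"
  define M where "M = a0 + b - 1"
  have h: "\<forall>j\<ge>b. coeff h j = 0" unfolding b_def using n by (auto intro: coeff_eq_0)
  have "degree f \<le> a0 - 1" using f a0 by (intro degree_le) auto
  then have "degree (f * h) \<le> (a0 - 1) + degree h"
    using degree_mult_le[of f h] by linarith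
  then have fh: "\<forall>j\<ge>M. coeff (f * h) j = 0"
    unfolding M_def b_def using n a0 by (intro allI impI coeff_eq_0) linarith
  have "xpow_minus n m dvd monom 1 (M - n) * Poly (rev c) - reverse_poly M (f * h)"
    by (rule xpow_minus_dvd_reverse_poly[OF lm n c_len _ fh]) (use Pc a0 in \<open>simp_all add: M_def b_def\<close>)
  also have "reverse_poly M (f * h) = reverse_poly a0 f * reverse_poly b h"
    unfolding M_def by (rule reverse_poly_mult[OF f h a0]) (simp add: b_def n)
  finally have rev_c: "xpow_minus n m dvd
      monom 1 (M - n) * Poly (rev c) - reverse_poly a0 f * reverse_poly b h" .
  have "monom 1 (M - n) * (Poly d * Poly (rev c)) - 0 =
      Poly d * (monom 1 (M - n) * Poly (rev c) - reverse_poly a0 f * reverse_poly b h)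
      + Poly d * reverse_poly a0 f * reverse_poly b h"
    by (simp add: algebra_simps)
  also have "xpow_minus n m dvd \<dots>"
    by (rule dvd_add[OF dvd_mult[OF rev_c] dvd_mult2[OF dvd]])
  finally obtain g where "xpow_minus n m dvd Poly d * Poly (rev c) - 0 * g"
    by (rule xpow_minus_dvd_cancel_monom[OF lm n])
  then have "constacyclic_rep n m (Poly d * Poly (rev c)) = constacyclic_rep n m 0"
    by (intro constacyclic_rep_eq_if_dvd n) simp
  then show ?thesis
    by (simp add: inner_product_eq_coeff_constacyclic_rep[OF d c_len n, of m])
qed

text \<open>Reversal takes \<open>x^k * reverse_poly a0 f\<close> back to a power of \<open>x\<close> times \<open>f\<close>, and \<open>x\<close>
  is a unit modulo \<open>x^n - l\<close>.\<close>
lemma rev_constacyclic_rep_shift_mem: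
  fixes f :: "'a::comm_ring_1 poly"
  assumes lm: "l * m = 1" and n: "0 < n" and a0: "0 < a0" and f: "\<forall>j\<ge>a0. coeff f j = 0"
  shows "rev (map (coeff (constacyclic_rep n m (monom 1 k * reverse_poly a0 f))) [0..<n])
      \<in> constacyclic_ideal n l f" (is "rev ?w \<in> _")
proof -
  define H where "H = monom 1 k * reverse_poly a0 f"
  define M where "M = k + a0 + n"
  have w_len: "length ?w = n" by simp
  have "Poly ?w = constacyclic_rep n m H"
    unfolding H_def by (rule Poly_map_coeff_upt) (simp add: coeff_constacyclic_rep_eq_0 n)
  then have "xpow_minus n m dvd Poly ?w - H"
    using xpow_minus_dvd_diff_constacyclic_rep[of n m H] by (metis dvd_minus_iff minus_diff_eq)
  then have "xpow_minus n l dvd monom 1 (M - n) * Poly (rev ?w) - reverse_poly M H"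
    using lm by (intro xpow_minus_dvd_reverse_poly[OF _ n w_len])
       (auto simp: M_def H_def coeff_monom_mult coeff_reverse_poly mult.commute[of m])
  also have "reverse_poly M H = reverse_poly ((k + 1) + (M - k) - 1) (monom 1 k * reverse_poly a0 f)"
    by (simp add: M_def H_def add.assoc)
  also have "\<dots> = reverse_poly (k + 1) (monom 1 k) * reverse_poly (M - k) (reverse_poly a0 f)"
    by (rule reverse_poly_mult) (use n in \<open>auto simp: M_def coeff_reverse_poly\<close>)
  also have "\<dots> = monom 1 (M - k - a0) * f"
    using reverse_poly_extend[where a = a0 and b = "M - k" and P = "reverse_poly a0 f"]
    by (simp add: reverse_poly_monom coeff_reverse_poly reverse_poly_reverse_poly[OF f] M_def)
  finally obtain g where "xpow_minus n l dvd Poly (rev ?w) - monom 1 (M - k - a0) * f * g"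
    using xpow_minus_dvd_cancel_monom[of m l n] lm n by (metis mult.commute)
  then obtain q where "Poly (rev ?w) = f * (monom 1 (M - k - a0) * g) + q * xpow_minus n l"
    by (auto elim!: dvdE simp: algebra_simps)
  then show ?thesis unfolding constacyclic_ideal_xpow_minus by auto
qed

text \<open>Each coefficient of the representative of \<open>Poly x * reverse_poly a0 f\<close> modulo
  \<open>x^n - m\<close> is the inner product of the word \<open>x\<close> with a codeword.\<close>
lemma xpow_minus_dvd_if_mem_dual_code:
  fixes f :: "'a::comm_ring_1 poly"
  assumes lm: "l * m = 1" and n: "0 < n" and a0: "0 < a0" and f: "\<forall>j\<ge>a0. coeff f j = 0"
    and x: "x \<in> dual_code n (constacyclic_ideal n l f)"
  shows "xpow_minus n m dvd Poly x * reverse_poly a0 f"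
proof -
  define F where "F = reverse_poly a0 f"
  define r where "r = constacyclic_rep n m (Poly x * F)"
  have x_len: "length x = n" using x by (simp add: dual_code_def)
  have r_high: "\<forall>j\<ge>n. coeff r j = 0" unfolding r_def using coeff_constacyclic_rep_eq_0[OF n] by auto
  have "r = 0"
  proof (rule poly_eqI)
    fix j
    show "coeff r j = coeff 0 j"
    proof (cases "j < n")
      case True
      define k where "k = n - 1 - j"
      define w where "w = map (coeff (constacyclic_rep n m (monom 1 k * F))) [0..<n]"
      have k: "k < n" and j: "j = n - 1 - k" using True by (auto simp: k_def)
      have "coeff r j = coeff (constacyclic_rep n m (monom 1 k * r)) (n - 1)"
        using coeff_constacyclic_rep_monom_mult[OF n r_high k] j by simp
      also have "constacyclic_rep n m (monom 1 k * r) = constacyclic_rep n m (Poly x * Poly w)"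
      proof (rule constacyclic_rep_eq_if_dvd[OF n])
        have "Poly w = constacyclic_rep n m (monom 1 k * F)"
          unfolding w_def by (rule Poly_map_coeff_upt) (simp add: coeff_constacyclic_rep_eq_0 n)
        then have "monom 1 k * r - Poly x * Poly w
            = Poly x * (monom 1 k * F - constacyclic_rep n m (monom 1 k * F))
              - monom 1 k * (Poly x * F - r)"
          by (simp add: r_def algebra_simps)
        also have "xpow_minus n m dvd \<dots>"
          unfolding r_def by (intro dvd_diff dvd_mult xpow_minus_dvd_diff_constacyclic_rep)
        finally show "xpow_minus n m dvd monom 1 k * r - Poly x * Poly w" .
      qed
      also have "coeff (constacyclic_rep n m (Poly x * Poly w)) (n - 1) = (\<Sum>t<n. x ! t * rev w ! t)"
        using inner_product_eq_coeff_constacyclic_rep[OF x_len _ n, of "rev w" m] by (simp add: w_def)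
      also have "\<dots> = 0"
        using x rev_constacyclic_rep_shift_mem[OF lm n a0 f, of k]
        by (auto simp: dual_code_def w_def F_def)
      finally show ?thesis by simp
    qed (simp add: r_high)
  qed
  then show ?thesis
    using xpow_minus_dvd_diff_constacyclic_rep[of n m "Poly x * F"] by (simp add: r_def F_def)
qed

theorem mem_dual_code_constacyclic_ideal_iff:
  fixes f :: "'a::comm_ring_1 poly"
  assumes "l * m = 1" and "0 < n" and "0 < a0" and "\<forall>j\<ge>a0. coeff f j = 0"
  shows "x \<in> dual_code n (constacyclic_ideal n l f)
    \<longleftrightarrow> length x = n \<and> xpow_minus n m dvd Poly x * reverse_poly a0 f"
  using xpow_minus_dvd_if_mem_dual_code[OF assms] inner_product_eq_0_if_dvd_reverse_poly[OF assms]
  by (auto simp: dual_code_def)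

section \<open>Polynomials over the dual numbers\<close>

abbreviation lift_poly :: "'a::comm_ring_1 poly \<Rightarrow> 'a dual poly" where
  "lift_poly P \<equiv> map_poly dconst P"

lemma coeff_lift_poly [simp]: "coeff (lift_poly P) k = dconst (coeff P k)"
  by (simp add: coeff_map_poly)

lemma lift_poly_add: "lift_poly (P + Q) = lift_poly P + lift_poly Q"
  by (rule poly_eqI) (simp add: dconst_add)

lemma lift_poly_diff: "lift_poly (P - Q) = lift_poly P - lift_poly Q"
  by (rule poly_eqI) (simp add: dconst_diff)

lemma lift_poly_smult: "lift_poly (smult a P) = smult (dconst a) (lift_poly P)"
  by (rule poly_eqI) (simp add: dconst_mult)

lemma lift_poly_pCons: "lift_poly (pCons a P) = pCons (dconst a) (lift_poly P)"
  by (rule poly_eqI) (simp add: coeff_pCons split: nat.split)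

lemma lift_poly_mult: "lift_poly (P * Q) = lift_poly P * lift_poly Q"
  by (induction P) (simp_all add: lift_poly_add lift_poly_smult lift_poly_pCons)

lemma lift_poly_power: "lift_poly (P ^ k) = lift_poly P ^ k"
  by (induction k) (simp_all add: lift_poly_mult)

lemma reverse_poly_lift_poly: "reverse_poly a (lift_poly P) = lift_poly (reverse_poly a P)"
  by (rule poly_eqI) (simp add: coeff_reverse_poly)

lemma dual_poly_decomp: "P = lift_poly (map_poly re P) + smult uu (lift_poly (map_poly du P))"
  by (rule poly_eqI) (simp add: coeff_map_poly dual_eq_iff)

lemma dual_poly_decomp_eqD:
  assumes "lift_poly A + smult uu (lift_poly B) = lift_poly A' + smult uu (lift_poly B')"
  shows "A = A'" and "B = B'"
proof -
  have "coeff A k = coeff A' k \<and> coeff B k = coeff B' k" for k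
    using arg_cong[OF assms, of "\<lambda>P. coeff P k"] by (simp add: dual_eq_iff)
  then show "A = A'" "B = B'" by (auto intro: poly_eqI)
qed

lemma xpow_minus_Dual:
  "xpow_minus n (Dual a b) = lift_poly (xpow_minus n a) - smult uu (lift_poly [:b:])"
  unfolding xpow_minus_def by (rule poly_eqI) (simp add: coeff_pCons dual_eq_iff split: nat.split)

lemma smult_uu_mult_smult_uu [simp]: "smult uu P * smult uu Q = (0::'a::comm_ring_1 dual poly)"
  by (simp add: mult.assoc)

text \<open>Since \<open>u\<^sup>2 = 0\<close>, \<open>(x^n - a)\<^sup>2 = (x^n - a - bu) (x^n - a + bu)\<close>; conversely, comparing
  the \<open>u\<close>-free parts and the \<open>u\<close>-parts of \<open>Q = (x^n - a - bu) (T\<^sub>0 + u T\<^sub>1)\<close> gives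
  \<open>Q = (x^n - a) T\<^sub>0\<close> and \<open>b T\<^sub>0 = (x^n - a) T\<^sub>1\<close>.\<close>
lemma xpow_minus_Dual_dvd_lift_poly_iff:
  fixes Q :: "'a::field poly"
  assumes b: "b \<noteq> 0"
  shows "xpow_minus n (Dual a b) dvd lift_poly Q \<longleftrightarrow> xpow_minus n a ^ 2 dvd Q"
proof
  assume "xpow_minus n (Dual a b) dvd lift_poly Q"
  then obtain T where T: "lift_poly Q = xpow_minus n (Dual a b) * T" by (auto elim: dvdE)
  define T0 where "T0 = map_poly re T"
  define T1 where "T1 = map_poly du T"
  have "lift_poly Q + smult uu (lift_poly 0)
      = (lift_poly (xpow_minus n a) - smult uu (lift_poly [:b:])) * (lift_poly T0 + smult uu (lift_poly T1))"
    unfolding T xpow_minus_Dual T0_def T1_def by (simp flip: dual_poly_decomp)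
  also have "\<dots> = lift_poly (xpow_minus n a * T0)
      + smult uu (lift_poly (xpow_minus n a * T1 - smult b T0))"
    by (simp add: algebra_simps lift_poly_mult lift_poly_diff lift_poly_smult lift_poly_pCons
        smult_diff_right)
  finally have decomp: "lift_poly Q + smult uu (lift_poly 0) = lift_poly (xpow_minus n a * T0)
      + smult uu (lift_poly (xpow_minus n a * T1 - smult b T0))" .
  have "T0 = smult (inverse b) (xpow_minus n a * T1)"
    using dual_poly_decomp_eqD(2)[OF decomp] b by simp
  then have "Q = xpow_minus n a ^ 2 * smult (inverse b) T1"
    using dual_poly_decomp_eqD(1)[OF decomp] by (simp add: power2_eq_square mult.assoc)
  then show "xpow_minus n a ^ 2 dvd Q" by (rule dvdI)
next
  assume "xpow_minus n a ^ 2 dvd Q"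
  then obtain T where T: "Q = xpow_minus n a ^ 2 * T" by (auto elim: dvdE)
  define K where "K = xpow_minus n (Dual a b)"
  define U where "U = smult uu (lift_poly [:b:])"
  have "lift_poly (xpow_minus n a) = K + U" by (simp add: K_def U_def xpow_minus_Dual)
  then have "lift_poly Q = K * ((K + 2 * U) * lift_poly T)"
    by (simp add: T U_def lift_poly_mult lift_poly_power power2_eq_square algebra_simps)
  then show "xpow_minus n (Dual a b) dvd lift_poly Q" by (simp add: K_def)
qed

text \<open>Modulo \<open>x^n - a - bu\<close>, a polynomial \<open>P\<^sub>0 + u P\<^sub>1\<close> is congruent to the polynomial
  \<open>P\<^sub>0 + b\<^sup>-\<^sup>1 (x^n - a) P\<^sub>1\<close> over \<open>F\<close>.\<close>
lemma xpow_minus_Dual_dvd_mult_lift_poly_iff: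
  fixes F g :: "'a::field poly"
  assumes b: "b \<noteq> 0" and ann: "\<And>Q. xpow_minus n a ^ 2 dvd Q * F \<longleftrightarrow> g dvd Q"
  shows "xpow_minus n (Dual a b) dvd P * lift_poly F
    \<longleftrightarrow> (\<exists>f q. P = lift_poly g * f + q * xpow_minus n (Dual a b))"
proof
  assume dvd: "xpow_minus n (Dual a b) dvd P * lift_poly F"
  define P0 where "P0 = map_poly re P"
  define P1 where "P1 = map_poly du P"
  define Q where "Q = P0 + smult (inverse b) (xpow_minus n a * P1)"
  have ib: "dconst (inverse b) * dconst b = 1" using b by (simp flip: dconst_mult)
  have "- lift_poly (smult (inverse b) P1) * xpow_minus n (Dual a b)
      = - lift_poly (smult (inverse b) (xpow_minus n a * P1))
        + smult (dconst (inverse b) * dconst b) (smult uu (lift_poly P1))"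
    unfolding xpow_minus_Dual by (simp add: algebra_simps lift_poly_mult lift_poly_smult lift_poly_pCons)
  also have "\<dots> = P - lift_poly Q"
    unfolding ib Q_def P0_def P1_def by (subst (2) dual_poly_decomp) (simp add: lift_poly_add)
  finally have P: "P = lift_poly Q + (- lift_poly (smult (inverse b) P1)) * xpow_minus n (Dual a b)"
    by (simp add: algebra_simps)
  have "lift_poly (Q * F) = P * lift_poly F
      - (- lift_poly (smult (inverse b) P1)) * lift_poly F * xpow_minus n (Dual a b)"
    by (subst P) (simp add: lift_poly_mult algebra_simps)
  also have "xpow_minus n (Dual a b) dvd \<dots>"
    using dvd by (intro dvd_diff) simp_all
  finally have "g dvd Q" by (simp add: xpow_minus_Dual_dvd_lift_poly_iff[OF b] ann)
  then obtain h where "Q = g * h" by (auto elim: dvdE)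
  then have "P = lift_poly g * lift_poly h
      + (- lift_poly (smult (inverse b) P1)) * xpow_minus n (Dual a b)"
    using P by (simp only: lift_poly_mult)
  then show "\<exists>f q. P = lift_poly g * f + q * xpow_minus n (Dual a b)" by blast
next
  assume "\<exists>f q. P = lift_poly g * f + q * xpow_minus n (Dual a b)"
  then obtain f q where P: "P = lift_poly g * f + q * xpow_minus n (Dual a b)" by blast
  have "xpow_minus n (Dual a b) dvd lift_poly (g * F)"
    by (simp add: xpow_minus_Dual_dvd_lift_poly_iff[OF b] ann)
  then show "xpow_minus n (Dual a b) dvd P * lift_poly F"
    unfolding P by (simp add: lift_poly_mult algebra_simps dvd_add dvd_mult2 dvd_mult)
qed

theorem dual_code_constacyclic_ideal_lift_poly:
  fixes f g :: "'a::field poly"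
  assumes n: "0 < n" and a: "a \<noteq> 0" and b: "b \<noteq> 0"
    and a0: "0 < a0" and f: "\<forall>j\<ge>a0. coeff f j = 0"
    and ann: "\<And>Q. xpow_minus n (inverse a) ^ 2 dvd Q * reverse_poly a0 f \<longleftrightarrow> g dvd Q"
  shows "dual_code n (constacyclic_ideal n (Dual a b) (lift_poly f))
    = constacyclic_ideal n (dinv (Dual a b)) (lift_poly g)"
proof -
  have b': "- b * inverse a ^ 2 \<noteq> 0" using a b by simp
  have "\<forall>j\<ge>a0. coeff (lift_poly f) j = 0" using f by simp
  note dual_iff = mem_dual_code_constacyclic_ideal_iff[OF Dual_mult_dinv[OF a] n a0 this]
  show ?thesis
  proof (rule Set.set_eqI)
    fix x
    have "x \<in> dual_code n (constacyclic_ideal n (Dual a b) (lift_poly f))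
        \<longleftrightarrow> length x = n \<and> xpow_minus n (dinv (Dual a b)) dvd Poly x * lift_poly (reverse_poly a0 f)"
      by (simp add: dual_iff reverse_poly_lift_poly)
    also have "\<dots> \<longleftrightarrow> x \<in> constacyclic_ideal n (dinv (Dual a b)) (lift_poly g)"
      unfolding dinv_Dual constacyclic_ideal_xpow_minus
        xpow_minus_Dual_dvd_mult_lift_poly_iff[OF b' ann] by simp
    finally show "x \<in> dual_code n (constacyclic_ideal n (Dual a b) (lift_poly f))
        \<longleftrightarrow> x \<in> constacyclic_ideal n (dinv (Dual a b)) (lift_poly g)" .
  qed
qed

section \<open>The quadratic factors\<close>

lemma CHAR_eq_if_card_eq_prime_power:
  assumes "prime p" and "card (UNIV :: 'a::{field,finite} set) = p ^ m"
  shows "CHAR('a) = p"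
proof -
  have "prime CHAR('a)" by (rule prime_CHAR_semidom) (simp add: finite_imp_CHAR_pos)
  moreover have "CHAR('a) dvd p ^ m" using CHAR_dvd_CARD[where 'a='a] assms(2) by simp
  ultimately show ?thesis
    using assms(1) by (metis prime_dvd_power primes_dvd_imp_eq)
qed

lemma xpow_minus_power_CHAR_power:
  fixes l :: "'a::comm_ring_1"
  assumes "CHAR('a) = p" and "prime p" and "odd p"
  shows "xpow_minus d l ^ (p ^ s) = xpow_minus (d * p ^ s) (l ^ p ^ s)"
proof -
  have "xpow_minus d l ^ (p ^ s) = (monom 1 d + - [:l:]) ^ (CHAR('a poly) ^ s)"
    by (simp only: xpow_minus_def diff_conv_add_uminus semiring_char_poly assms(1))
  also have "\<dots> = monom 1 d ^ (CHAR('a poly) ^ s) + (- [:l:]) ^ (CHAR('a poly) ^ s)"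
    using assms(1,2) by (intro freshmans_dream') simp_all
  also have "\<dots> = xpow_minus (d * p ^ s) (l ^ p ^ s)"
    using assms by (simp add: xpow_minus_def monom_power poly_const_pow)
  finally show ?thesis .
qed

lemma degree_power_mult_power_le:
  fixes f g :: "'a::comm_semiring_1 poly"
  assumes "degree f \<le> d" and "degree g \<le> d"
  shows "degree (f ^ i * g ^ j) \<le> d * (i + j)"
proof -
  have "degree (f ^ i) \<le> d * i" "degree (g ^ j) \<le> d * j"
    using degree_power_le[of f i] degree_power_le[of g j] assms
    by (metis mult.commute mult_right_mono order_trans zero_le)+
  then show ?thesis
    using degree_mult_le[of "f ^ i" "g ^ j"] by (simp add: algebra_simps)
qed

lemma reverse_poly_power_mult_power:
  assumes "degree f \<le> d" and "degree g \<le> d"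
  shows "reverse_poly (d * (i + j) + 1) (f ^ i * g ^ j)
    = reverse_poly (d + 1) f ^ i * reverse_poly (d + 1) g ^ j"
proof -
  have "degree (f ^ i) \<le> d * i" "degree (g ^ j) \<le> d * j"
    using degree_power_mult_power_le[OF assms, of i 0] degree_power_mult_power_le[OF assms, of 0 j]
    by simp_all
  then have "reverse_poly ((d * i + 1) + (d * j + 1) - 1) (f ^ i * g ^ j)
      = reverse_poly (d * i + 1) (f ^ i) * reverse_poly (d * j + 1) (g ^ j)"
    by (intro reverse_poly_mult) (auto intro: coeff_eq_0)
  then show ?thesis
    using reverse_poly_power[OF assms(1), of i] reverse_poly_power[OF assms(2), of j]
    by (simp add: algebra_simps)
qed

lemma power_mult_dvd_mult_smult_powers_iff:
  fixes u v :: "'a::field poly"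
  assumes "c \<noteq> 0" and "u \<noteq> 0" and "v \<noteq> 0" and "i \<le> N" and "j \<le> N"
  shows "(u * v) ^ N dvd Q * smult c (u ^ i * v ^ j) \<longleftrightarrow> u ^ (N - i) * v ^ (N - j) dvd Q"
proof -
  have split: "(u * v) ^ N = u ^ (N - i) * v ^ (N - j) * (u ^ i * v ^ j)"
    using assms(4,5) by (simp add: power_mult_distrib mult_ac flip: power_add)
  have "(u * v) ^ N dvd Q * smult c (u ^ i * v ^ j) \<longleftrightarrow> (u * v) ^ N dvd Q * (u ^ i * v ^ j)"
    by (simp only: mult_smult_right dvd_smult_iff[OF assms(1)])
  also have "\<dots> \<longleftrightarrow> u ^ (N - i) * v ^ (N - j) dvd Q"
    unfolding split using assms(2,3) by (intro dvd_times_right_cancel_iff) simp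
  finally show ?thesis .
qed

lemma quadratic_factors_mult:
  fixes \<gamma> :: "'a::field"
  assumes "\<gamma> \<noteq> 0" and "(2::'a) \<noteq> 0" and "\<gamma> ^ 4 + 4 * \<alpha>0 = 0"
  shows "[:2 / \<gamma> ^ 2, 2 * inverse \<gamma>, 1:] * [:2 / \<gamma> ^ 2, - 2 * inverse \<gamma>, 1:]
    = xpow_minus 4 (inverse \<alpha>0)"
proof -
  have four: "(4::'a) \<noteq> 0" using assms(2) by (metis mult_2 mult_eq_0_iff numeral_Bit0 one_add_one)
  have a4: "4 * \<alpha>0 = - (\<gamma> ^ 4)" using assms(3) by (simp add: eq_neg_iff_add_eq_0 add.commute)
  then have "\<alpha>0 \<noteq> 0" using assms(1) by auto
  then have "inverse \<alpha>0 = - 4 / \<gamma> ^ 4" using a4 four assms(1) by (simp add: field_simps)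
  then show ?thesis
    using assms(1,2)
    by (simp add: xpow_minus_def monom_Suc monom_0 numeral_eq_Suc field_simps)
qed

lemma reverse_poly_quadratic_factors:
  fixes \<gamma> :: "'a::field"
  assumes "\<gamma> \<noteq> 0" and "(2::'a) \<noteq> 0"
  shows "reverse_poly 3 [:\<gamma> ^ 2 / 2, \<gamma>, 1:] = smult (\<gamma> ^ 2 / 2) [:2 / \<gamma> ^ 2, 2 * inverse \<gamma>, 1:]"
    and "reverse_poly 3 [:\<gamma> ^ 2 / 2, - \<gamma>, 1:] = smult (\<gamma> ^ 2 / 2) [:2 / \<gamma> ^ 2, - 2 * inverse \<gamma>, 1:]"
  using assms by (simp_all add: reverse_poly_quadratic field_simps power2_eq_square)

lemma xpow_minus_sq_dvd_mult_reverse_quadratic_powers_iff: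
  fixes \<alpha> \<alpha>0 \<gamma> :: "'a::field"
  assumes char: "CHAR('a) = p" and p: "prime p" "odd p"
    and \<alpha>: "\<alpha> \<noteq> 0" "\<alpha>0 ^ (p ^ s) = \<alpha>" and \<gamma>: "\<gamma> ^ 4 + 4 * \<alpha>0 = 0"
    and ij: "i \<le> 2 * p ^ s" "j \<le> 2 * p ^ s"
  defines "f1 \<equiv> [:\<gamma> ^ 2 / 2, \<gamma>, 1:]" and "f2 \<equiv> [:\<gamma> ^ 2 / 2, - \<gamma>, 1:]"
    and "g1 \<equiv> [:2 / \<gamma> ^ 2, 2 * inverse \<gamma>, 1:]" and "g2 \<equiv> [:2 / \<gamma> ^ 2, - 2 * inverse \<gamma>, 1:]"
  shows "xpow_minus (4 * p ^ s) (inverse \<alpha>) ^ 2 dvd Q * reverse_poly (2 * (i + j) + 1) (f1 ^ i * f2 ^ j)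
    \<longleftrightarrow> g1 ^ (2 * p ^ s - i) * g2 ^ (2 * p ^ s - j) dvd Q"
proof -
  have two: "(2::'a) \<noteq> 0"
    using char p of_nat_eq_0_iff_char_dvd[of 2, where 'a='a]
    by (metis dvd_imp_le even_numeral of_nat_numeral prime_ge_2_nat le_antisym zero_less_numeral)
  then have "(4::'a) \<noteq> 0" by (metis mult_2 mult_eq_0_iff numeral_Bit0 one_add_one)
  moreover have "p ^ s > 0" using p(1) prime_gt_0_nat by simp
  ultimately have \<gamma>0: "\<gamma> \<noteq> 0" using \<alpha> \<gamma> by (auto simp: power_0_left)
  have "(g1 * g2) ^ (2 * p ^ s) = (xpow_minus 4 (inverse \<alpha>0) ^ p ^ s) ^ 2"
    unfolding g1_def g2_def quadratic_factors_mult[OF \<gamma>0 two \<gamma>]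
    by (metis mult.commute power_mult)
  also have "\<dots> = xpow_minus (4 * p ^ s) (inverse \<alpha>) ^ 2"
    by (simp add: xpow_minus_power_CHAR_power[OF char p] power_inverse \<alpha>)
  finally have factor: "xpow_minus (4 * p ^ s) (inverse \<alpha>) ^ 2 = (g1 * g2) ^ (2 * p ^ s)" ..
  have "reverse_poly (2 * (i + j) + 1) (f1 ^ i * f2 ^ j)
      = reverse_poly 3 f1 ^ i * reverse_poly 3 f2 ^ j"
    using reverse_poly_power_mult_power[of f1 2 f2 i j] by (simp add: f1_def f2_def)
  also have "\<dots> = smult (\<gamma> ^ 2 / 2) g1 ^ i * smult (\<gamma> ^ 2 / 2) g2 ^ j"
    using reverse_poly_quadratic_factors[OF \<gamma>0 two] by (simp only: f1_def f2_def g1_def g2_def)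
  also have "\<dots> = smult ((\<gamma> ^ 2 / 2) ^ (i + j)) (g1 ^ i * g2 ^ j)"
    by (simp add: smult_power power_add mult_ac)
  finally have reverse: "reverse_poly (2 * (i + j) + 1) (f1 ^ i * f2 ^ j)
      = smult ((\<gamma> ^ 2 / 2) ^ (i + j)) (g1 ^ i * g2 ^ j)" .
  show ?thesis
    unfolding factor reverse using \<gamma>0 two ij
    by (intro power_mult_dvd_mult_smult_powers_iff) (simp_all add: g1_def g2_def)
qed

theorem theorem3p7:
  fixes p m s i j :: nat
    and \<alpha> \<alpha>0 \<beta> \<gamma> :: "'a::{field, finite}"
  assumes "prime p" and "odd p" and "m > 0" and "s > 0"
    and "card (UNIV :: 'a set) = p ^ m"
    and "p ^ m mod 4 = 3"
    and "\<alpha> \<noteq> 0" and "\<not> (\<exists>y. y ^ 2 = \<alpha>)"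
    and "\<alpha>0 ^ (p ^ s) = \<alpha>"
    and "\<gamma> ^ 4 + 4 * \<alpha>0 = 0"
    and "\<beta> \<noteq> 0"
    and "i \<le> 2 * p ^ s" and "j \<le> 2 * p ^ s"
  shows
    "dual_code (4 * p ^ s)
       (constacyclic_ideal (4 * p ^ s) (dconst \<alpha> + dconst \<beta> * uu)
          ([:dconst (\<gamma> ^ 2 / 2), dconst \<gamma>, 1:] ^ i *
           [:dconst (\<gamma> ^ 2 / 2), dconst (- \<gamma>), 1:] ^ j))
     = constacyclic_ideal (4 * p ^ s) (dinv (dconst \<alpha> + dconst \<beta> * uu))
          ([:dconst (2 / \<gamma> ^ 2), dconst (2 * inverse \<gamma>), 1:] ^ (2 * p ^ s - i) *
           [:dconst (2 / \<gamma> ^ 2), dconst (- 2 * inverse \<gamma>), 1:] ^ (2 * p ^ s - j))"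
proof -
  let ?f = "[:\<gamma> ^ 2 / 2, \<gamma>, 1:] ^ i * [:\<gamma> ^ 2 / 2, - \<gamma>, 1:] ^ j"
  let ?g = "[:2 / \<gamma> ^ 2, 2 * inverse \<gamma>, 1:] ^ (2 * p ^ s - i) *
    [:2 / \<gamma> ^ 2, - 2 * inverse \<gamma>, 1:] ^ (2 * p ^ s - j)"
  have "CHAR('a) = p" by (rule CHAR_eq_if_card_eq_prime_power[OF assms(1,5)])
  note annihilator =
    xpow_minus_sq_dvd_mult_reverse_quadratic_powers_iff[OF this assms(1,2,7,9,10,12,13)]
  have "\<forall>k\<ge>2 * (i + j) + 1. coeff ?f k = 0"
    by (intro allI impI coeff_eq_0 le_less_trans[OF degree_power_mult_power_le[where d = 2]]) simp_all
  from dual_code_constacyclic_ideal_lift_poly[OF _ assms(7,11) _ this annihilator]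
  have "dual_code (4 * p ^ s) (constacyclic_ideal (4 * p ^ s) (Dual \<alpha> \<beta>) (lift_poly ?f))
      = constacyclic_ideal (4 * p ^ s) (dinv (Dual \<alpha> \<beta>)) (lift_poly ?g)"
    using assms(1) prime_gt_0_nat by simp
  then show ?thesis
    by (simp add: dconst_add_dconst_mult_uu lift_poly_mult lift_poly_power lift_poly_pCons)
qed

end
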